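(* Let $\Omega=\Omega_e\cup\Omega_o\subset\mathbb{Z}_2^n\setminus\{\mathbf 0\}$, where $\Omega_e$ and $\Omega_o$ are both nonempty, every tuple in $\Omega_e$ has even Hamming weight and every tuple in $\Omega_o$ has odd Hamming weight, and suppose $r(\Omega)=n$. Let $k=\min_{\beta\in\Omega_e}s(\beta)$, $l=\min_{\beta\in\Omega_o}s(\beta)$, $\Omega_e^*=\{\beta\in\Omega_e: s(\beta)=k\}$ and $\Omega_o^*=\{\beta\in\Omega_o:s(\beta)=l\}$. If either $\sum_{\beta\in\Omega_o^*}\beta\neq\mathbf 0$ in $\mathbb{Z}_2^n$ or $\sum_{\beta\in\Omega_e^*}\beta\neq\mathbf 0$ in $\mathbb{Z}_2^n$, then $\mathrm{NEPS}(P_3,\ldots,P_3;\Omega)$ exhibits pretty good state transfer between some pair of distinct vertices.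
   Context: $P_3$ is the path on three vertices. For graphs $G_1,\dots,G_n$ and $\Omega\subset\mathbb{Z}_2^n\setminus\{\mathbf 0\}$, $\mathrm{NEPS}(G_1,\dots,G_n;\Omega)$ is the graph on $V(G_1)\times\cdots\times V(G_n)$ in which $(x_1,\dots,x_n)$ and $(y_1,\dots,y_n)$ are adjacent iff there is $\beta\in\Omega$ with $x_i=y_i$ whenever $\beta_i=0$ and $x_i$ adjacent to $y_i$ in $G_i$ whenever $\beta_i=1$; its adjacency matrix is $\sum_{\beta\in\Omega}A_1^{\beta_1}\otimes\cdots\otimes A_n^{\beta_n}$. The Hamming weight $s(\beta)$ is the number of entries of $\beta$ equal to $1$. $r(\Omega)$ denotes the rank over $\mathbb{Z}_2$ of the matrix whose rows are the elements of $\Omega$. The transition matrix of a graph with adjacency matrix $A$ is $H(t)=\exp(-itA)$. A graph has pretty good state transfer (PGST) from vertex $u$ to vertex $v$ if for every $\epsilon>0$ there is $t\in\mathbb R$ with $\big||e_u^TH(t)e_v|-1\big|<\epsilon$. *)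

theory Defs
  imports Complex_Main
begin

text \<open>Elements of Z_2^n are boolean lists of length n (True = 1).\<close>

definition zvecs :: "nat \<Rightarrow> bool list set" where
  "zvecs n = {\<beta>. length \<beta> = n}"

definition hweight :: "bool list \<Rightarrow> nat" where
  "hweight \<beta> = length (filter id \<beta>)"

definition zsum :: "nat \<Rightarrow> bool list set \<Rightarrow> bool list" where
  "zsum n S = map (\<lambda>i. odd (card {\<beta>\<in>S. \<beta> ! i})) [0..<n]"

definition zzero :: "nat \<Rightarrow> bool list" where
  "zzero n = replicate n False"

definition gf2_indep :: "nat \<Rightarrow> bool list set \<Rightarrow> bool" where
  "gf2_indep n S \<longleftrightarrow> (\<forall>T\<subseteq>S. T \<noteq> {} \<longrightarrow> zsum n T \<noteq> zzero n)"

definition gf2_rank :: "nat \<Rightarrow> bool list set \<Rightarrow> nat" where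
  "gf2_rank n \<Omega> = Max {card S | S. S \<subseteq> \<Omega> \<and> gf2_indep n S}"

text \<open>The path P_3 on vertices 0,1,2.\<close>
definition p3adj :: "nat \<Rightarrow> nat \<Rightarrow> bool" where
  "p3adj a b \<longleftrightarrow> a + 1 = b \<or> b + 1 = a"

definition neps_verts :: "nat \<Rightarrow> nat list set" where
  "neps_verts n = {x. length x = n \<and> set x \<subseteq> {0,1,2}}"

text \<open>Adjacency matrix: sum over beta of A^{beta_1} (x) ... (x) A^{beta_n}.\<close>
definition neps_adj :: "nat \<Rightarrow> bool list set \<Rightarrow> nat list \<Rightarrow> nat list \<Rightarrow> complex" where
  "neps_adj n \<Omega> x y = of_nat (card {\<beta>\<in>\<Omega>. \<forall>i<n.
      (if \<beta> ! i then p3adj (x ! i) (y ! i) else x ! i = y ! i)})"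

fun neps_adj_pow :: "nat \<Rightarrow> bool list set \<Rightarrow> nat \<Rightarrow> nat list \<Rightarrow> nat list \<Rightarrow> complex" where
  "neps_adj_pow n \<Omega> 0 x y = (if x = y then 1 else 0)"
| "neps_adj_pow n \<Omega> (Suc k) x y =
     (\<Sum>w\<in>neps_verts n. neps_adj n \<Omega> x w * neps_adj_pow n \<Omega> k w y)"

definition neps_H :: "nat \<Rightarrow> bool list set \<Rightarrow> real \<Rightarrow> nat list \<Rightarrow> nat list \<Rightarrow> complex" where
  "neps_H n \<Omega> t u v = (\<Sum>k. ((- \<i> * of_real t) ^ k / of_nat (fact k)) * neps_adj_pow n \<Omega> k u v)"

definition neps_pgst :: "nat \<Rightarrow> bool list set \<Rightarrow> nat list \<Rightarrow> nat list \<Rightarrow> bool" where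
  "neps_pgst n \<Omega> u v \<longleftrightarrow> (\<forall>\<epsilon>>0. \<exists>t::real. \<bar>cmod (neps_H n \<Omega> t u v) - 1\<bar> < \<epsilon>)"

end

theory Submission
  imports Defs "HOL-Analysis.Kronecker_Approximation_Theorem"
begin

text \<open>
  The adjacency matrix of \<open>NEPS(P\<^sub>3,\<dots>,P\<^sub>3;\<Omega>)\<close> is diagonalised by tensor products of the
  eigenvectors of \<open>P\<^sub>3\<close> (eigenvalues \<open>\<surd>2, 0, -\<surd>2\<close>), so its eigenvalues are
  \<open>\<lambda>\<^sub>a = \<Sum>\<^sub>\<beta> \<chi>\<^sub>\<beta>(a) \<surd>2\<^bsup>s(\<beta>)\<^esup>\<close> with \<open>\<chi>\<^sub>\<beta>(a) \<in> {-1,0,1}\<close>.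
  Pick a coordinate \<open>j\<close> in which an odd number of the minimal-weight tuples of the chosen
  parity class (weight \<open>k\<close>) have a \<open>1\<close>, and let \<open>u\<close>, \<open>v\<close> be the vertices lying at the centre of
  \<open>P\<^sub>3\<close> in every coordinate except \<open>j\<close>, where they are the two ends.
  Since \<open>\<surd>2\<close> is irrational, Kronecker's theorem gives times \<open>t\<close> for which \<open>t\<close> and \<open>\<surd>2 t\<close> are
  arbitrarily close modulo \<open>2\<pi>\<close> to \<open>0\<close> and \<open>\<pi>/2\<^bsup>\<lfloor>k/2\<rfloor>\<^esup>\<close> respectively for an odd class, and
  the other way round for an even one.
  Then a tuple of that parity and weight \<open>s\<close> contributes the phase \<open>\<pi> 2\<^bsup>(s-k)/2\<^esup>\<close>, an odd
  multiple of \<open>\<pi>\<close> exactly at minimal weight, and all other tuples contribute multiples of \<open>2\<pi>\<close>.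
  So every \<open>e\<^bsup>-it\<lambda>\<^sub>a\<^esup>\<close> is close to a sign, and these signs are exactly the ones for which the
  spectral expansion of \<open>H(t)\<^sub>u\<^sub>v\<close> has modulus one.
\<close>

section \<open>Phases and simultaneous approximation\<close>

lemma norm_cis_minus_1_le: "cmod (cis x - 1) \<le> \<bar>x\<bar>"
proof -
  have "cmod (cis x - 1) = 2 * \<bar>sin (x / 2)\<bar>"
    using dist_exp_i_1[of x] by (simp add: cis_conv_exp)
  also have "\<dots> \<le> \<bar>x\<bar>"
    using abs_sin_x_le_abs_x[of "x / 2"] by simp
  finally show ?thesis .
qed

lemma cis_minus_pi_int:
  assumes "even K \<longleftrightarrow> even k"
  shows "cis (- (pi * of_int K)) = (-1) ^ k"
proof (cases "even K")
  case True
  then obtain q where "K = 2 * q" by blast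
  then have q: "- (pi * of_int K) = 2 * pi * of_int (- q)"
    by simp
  have "cis (- (pi * of_int K)) = 1"
    unfolding q by (rule cis_multiple_2pi) simp
  then show ?thesis
    using True assms by simp
next
  case False
  then obtain q where "K = 2 * q + 1" using oddE by blast
  then have q: "- (pi * of_int K) = 2 * pi * of_int (- q) + - pi"
    by (simp add: algebra_simps)
  have "cis (- (pi * of_int K)) = cis (2 * pi * of_int (- q)) * cis (- pi)"
    unfolding q by (rule cis_mult[symmetric])
  also have "cis (2 * pi * of_int (- q)) = 1"
    by (rule cis_multiple_2pi) simp
  finally show ?thesis
    using False assms by (simp add: cis_cnj[symmetric])
qed

lemma norm_cis_minus_sign_le:
  fixes K N :: int
  assumes "even K \<longleftrightarrow> even k"
  shows "cmod (cis (- (pi * of_int K + 2 * pi * of_int N + e)) - (-1) ^ k) \<le> \<bar>e\<bar>"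
proof -
  have "cis (- (pi * of_int K + 2 * pi * of_int N + e))
      = cis (- (pi * of_int K)) * cis (2 * pi * of_int (- N)) * cis (- e)"
    by (simp add: cis_mult algebra_simps)
  also have "cis (2 * pi * of_int (- N)) = 1"
    by (rule cis_multiple_2pi) simp
  finally have "cmod (cis (- (pi * of_int K + 2 * pi * of_int N + e)) - (-1) ^ k)
      = cmod ((-1) ^ k * (cis (- e) - 1))"
    by (simp add: cis_minus_pi_int[OF assms] right_diff_distrib)
  also have "\<dots> \<le> \<bar>e\<bar>"
    using norm_cis_minus_1_le[of "- e"] by (simp add: norm_mult norm_power)
  finally show ?thesis .
qed

lemma norm_sum_near_unit:
  fixes w :: "'a \<Rightarrow> real" and z s :: "'a \<Rightarrow> complex"
  assumes "(\<Sum>a\<in>A. \<bar>w a\<bar>) \<le> 1" "cmod (\<Sum>a\<in>A. of_real (w a) * s a) = 1"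
    and "\<And>a. a \<in> A \<Longrightarrow> w a \<noteq> 0 \<Longrightarrow> cmod (z a - s a) \<le> e" "0 \<le> e"
  shows "\<bar>cmod (\<Sum>a\<in>A. of_real (w a) * z a) - 1\<bar> \<le> e"
proof -
  have "cmod ((\<Sum>a\<in>A. of_real (w a) * z a) - (\<Sum>a\<in>A. of_real (w a) * s a))
      = cmod (\<Sum>a\<in>A. of_real (w a) * (z a - s a))"
    by (simp add: sum_subtractf right_diff_distrib)
  also have "\<dots> \<le> (\<Sum>a\<in>A. \<bar>w a\<bar> * cmod (z a - s a))"
    by (rule order_trans[OF norm_sum]) (simp add: norm_mult)
  also have "\<dots> \<le> (\<Sum>a\<in>A. \<bar>w a\<bar> * e)"
  proof (intro sum_mono)
    fix a assume "a \<in> A"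
    show "\<bar>w a\<bar> * cmod (z a - s a) \<le> \<bar>w a\<bar> * e"
      using assms(3)[OF \<open>a \<in> A\<close>] by (cases "w a = 0") (auto intro: mult_left_mono)
  qed
  also have "\<dots> \<le> e"
    using assms(1,4) by (simp add: sum_distrib_right[symmetric] mult_left_le_one_le)
  finally show ?thesis
    using norm_triangle_ineq3[of "\<Sum>a\<in>A. of_real (w a) * z a" "\<Sum>a\<in>A. of_real (w a) * s a"]
    unfolding assms(2) by linarith
qed

lemma sqrt2_not_rat: "sqrt 2 \<notin> \<rat>"
proof
  assume "sqrt 2 \<in> \<rat>"
  then obtain m n :: nat where n: "n \<noteq> 0" and e: "\<bar>sqrt 2\<bar> = real m / real n"
    and coprime: "coprime m n"
    by (rule Rats_abs_nat_div_natE)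
  have "sqrt 2 * real n = real m"
    using e n by (simp add: field_simps)
  then have "(sqrt 2 * real n) ^ 2 = real m ^ 2"
    by simp
  then have "real (2 * n ^ 2) = real (m ^ 2)"
    by (simp add: power_mult_distrib)
  then have eq: "2 * n ^ 2 = m ^ 2"
    by (simp only: of_nat_eq_iff)
  then have "even (m ^ 2)"
    by (metis dvd_triv_left)
  then have "even m"
    by simp
  then obtain k where "m = 2 * k" by blast
  with eq have "n ^ 2 = 2 * k ^ 2"
    by (simp add: power_mult_distrib)
  then have "even (n ^ 2)"
    by simp
  then have "even n"
    by simp
  with \<open>even m\<close> coprime have "is_unit (2::nat)"
    using coprime_common_divisor by blast
  then show False
    by simp
qed

lemma sqrt2_simultaneous_approx:
  assumes "\<delta> > 0"
  obtains m p :: int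
  where "\<bar>sqrt 2 * (\<theta>\<^sub>1 + 2 * pi * m) - \<theta>\<^sub>2 - 2 * pi * p\<bar> < \<delta>"
proof -
  define \<alpha> where "\<alpha> = (\<theta>\<^sub>2 - sqrt 2 * \<theta>\<^sub>1) / (2 * pi)"
  have "\<delta> / (2 * pi) > 0"
    using assms by simp
  then obtain p m :: int where pm: "\<bar>of_int m * sqrt 2 - of_int p - \<alpha>\<bar> < \<delta> / (2 * pi)"
    using sequence_of_fractional_parts_is_dense[OF sqrt2_not_rat] by blast
  have "sqrt 2 * (\<theta>\<^sub>1 + 2 * pi * m) - \<theta>\<^sub>2 - 2 * pi * p = 2 * pi * (of_int m * sqrt 2 - of_int p - \<alpha>)"
    by (simp add: \<alpha>_def field_simps)
  then have "\<bar>sqrt 2 * (\<theta>\<^sub>1 + 2 * pi * m) - \<theta>\<^sub>2 - 2 * pi * p\<bar>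
      = 2 * pi * \<bar>of_int m * sqrt 2 - of_int p - \<alpha>\<bar>"
    by (simp add: abs_mult)
  also have "\<dots> < 2 * pi * (\<delta> / (2 * pi))"
    using pm by (intro mult_strict_left_mono) auto
  finally have "\<bar>sqrt 2 * (\<theta>\<^sub>1 + 2 * pi * m) - \<theta>\<^sub>2 - 2 * pi * p\<bar> < \<delta>"
    by simp
  then show ?thesis by (rule that)
qed

lemma sqrt2_power_phase:
  fixes m p :: int
  assumes "t = \<theta> False + 2 * pi * m" "sqrt 2 * t = \<theta> True + 2 * pi * p + \<eta>"
  shows "t * sqrt 2 ^ s = \<theta> (odd s) * 2 ^ (s div 2)
           + 2 * pi * of_int ((if odd s then p else m) * 2 ^ (s div 2))
           + \<eta> * (of_bool (odd s) * 2 ^ (s div 2))"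
proof (cases "even s")
  case True
  then obtain q where "s = 2 * q" by blast
  then have "sqrt 2 ^ s = 2 ^ (s div 2)"
    by (simp add: power_mult)
  then show ?thesis
    using True assms(1) by (simp add: algebra_simps)
next
  case False
  then obtain q where "s = 2 * q + 1" using oddE by blast
  then have "sqrt 2 ^ s = sqrt 2 * 2 ^ (s div 2)"
    by (simp add: power_mult)
  then have "t * sqrt 2 ^ s = (sqrt 2 * t) * 2 ^ (s div 2)"
    by (simp add: algebra_simps)
  also have "\<dots> = (\<theta> True + 2 * pi * p + \<eta>) * 2 ^ (s div 2)"
    using assms(2) by simp
  finally show ?thesis
    using False by (simp add: algebra_simps)
qed

lemma half_weight_power_ratio:
  assumes "k \<le> s" "odd s = odd k"
  shows "pi / 2 ^ (k div 2) * 2 ^ (s div 2) = pi * of_int (2 ^ (s div 2 - k div 2))"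
    and "odd ((2::int) ^ (s div 2 - k div 2)) \<longleftrightarrow> s = k"
proof -
  have "k div 2 \<le> s div 2"
    using assms(1) by (rule div_le_mono)
  then have "(2::real) ^ (s div 2) = 2 ^ (k div 2) * 2 ^ (s div 2 - k div 2)"
    by (simp flip: power_add)
  then show "pi / 2 ^ (k div 2) * 2 ^ (s div 2) = pi * of_int (2 ^ (s div 2 - k div 2))"
    by simp
  have "odd ((2::int) ^ (s div 2 - k div 2)) \<longleftrightarrow> s div 2 - k div 2 = 0"
    by (simp add: not_less)
  also have "\<dots> \<longleftrightarrow> s = k"
    using assms by presburger
  finally show "odd ((2::int) ^ (s div 2 - k div 2)) \<longleftrightarrow> s = k" .
qed

lemma hweight_eq_card: "length \<beta> = n \<Longrightarrow> hweight \<beta> = card {i. i < n \<and> \<beta> ! i}"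
  unfolding hweight_def length_filter_conv_card by (auto intro: arg_cong[where f = card])

lemma zsum_neq_zzeroE:
  assumes "zsum n S \<noteq> zzero n"
  obtains j where "j < n" "odd (card {\<beta>\<in>S. \<beta> ! j})"
proof -
  have "\<exists>j<n. odd (card {\<beta>\<in>S. \<beta> ! j})"
  proof (rule ccontr)
    assume "\<not> (\<exists>j<n. odd (card {\<beta>\<in>S. \<beta> ! j}))"
    then have "zsum n S = zzero n"
      unfolding zsum_def zzero_def by (intro nth_equalityI) auto
    with assms show False by simp
  qed
  then show thesis
    using that by blast
qed

section \<open>The spectrum of \<open>P\<^sub>3\<close>\<close>

definition p3_sign :: "nat \<Rightarrow> int" where
  "p3_sign c = (if c = 0 then 1 else if c = 1 then 0 else -1)"

definition p3_eigval :: "nat \<Rightarrow> real" where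
  "p3_eigval c = of_int (p3_sign c) * sqrt 2"

text \<open>Row \<open>c\<close> is the unit eigenvector of \<open>P\<^sub>3\<close> (vertex \<open>1\<close> being the centre) for the
  eigenvalue \<open>p3_eigval c\<close>; the three rows form an orthogonal matrix.\<close>

definition p3_eigvec :: "nat \<Rightarrow> nat \<Rightarrow> real" where
  "p3_eigvec c x =
     (if c = 1 then (if x = 0 then sqrt 2 / 2 else if x = 1 then 0 else - sqrt 2 / 2)
      else if x = 1 then of_int (p3_sign c) * sqrt 2 / 2 else 1 / 2)"

definition p3_rel :: "bool \<Rightarrow> nat \<Rightarrow> nat \<Rightarrow> bool" where
  "p3_rel b x y \<longleftrightarrow> (if b then p3adj x y else x = y)"

lemma p3_eigvec_complete:
  assumes "x \<in> {0,1,2}" "y \<in> {0,1,2}"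
  shows "(\<Sum>c\<in>{0,1,2}. p3_eigvec c x * p3_eigvec c y) = of_bool (x = y)"
  using assms by (auto simp: p3_eigvec_def p3_sign_def)

lemma p3_rel_eigvec:
  assumes "x \<in> {0,1,2}" "c \<in> {0,1,2}"
  shows "(\<Sum>y\<in>{0,1,2}. of_bool (p3_rel b x y) * p3_eigvec c y)
           = (if b then p3_eigval c else 1) * p3_eigvec c x"
  using assms by (auto simp: p3_rel_def p3adj_def p3_eigvec_def p3_eigval_def p3_sign_def)

section \<open>Spectral decomposition of the NEPS\<close>

lemma neps_verts_0: "neps_verts 0 = {[]}"
  by (auto simp: neps_verts_def)

lemma neps_verts_Suc: "neps_verts (Suc n) = (\<lambda>(c, w). c # w) ` ({0,1,2} \<times> neps_verts n)"
  by (auto simp: neps_verts_def length_Suc_conv image_iff)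

lemma neps_verts_nth: "x \<in> neps_verts n \<Longrightarrow> i < n \<Longrightarrow> x ! i \<in> {0,1,2}"
  unfolding neps_verts_def using nth_mem by blast

lemma sum_neps_verts_prod:
  fixes f :: "nat \<Rightarrow> nat \<Rightarrow> 'a::comm_semiring_1"
  shows "(\<Sum>w\<in>neps_verts n. \<Prod>i<n. f i (w ! i)) = (\<Prod>i<n. \<Sum>c\<in>{0,1,2}. f i c)"
proof (induction n arbitrary: f)
  case 0
  then show ?case by (simp add: neps_verts_0)
next
  case (Suc n)
  have inj: "inj_on (\<lambda>(c, w). c # w) ({0,1,2::nat} \<times> neps_verts n)"
    by (auto simp: inj_on_def)
  have "(\<Sum>w\<in>neps_verts (Suc n). \<Prod>i<Suc n. f i (w ! i))
      = (\<Sum>(c, w)\<in>{0,1,2} \<times> neps_verts n. \<Prod>i<Suc n. f i ((c # w) ! i))"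
    unfolding neps_verts_Suc by (subst sum.reindex[OF inj]) (simp add: case_prod_beta)
  also have "\<dots> = (\<Sum>(c, w)\<in>{0,1,2} \<times> neps_verts n. f 0 c * (\<Prod>i<n. f (Suc i) (w ! i)))"
    by (simp only: prod.lessThan_Suc_shift nth_Cons_0 nth_Cons_Suc)
  also have "\<dots> = (\<Sum>c\<in>{0,1,2}. f 0 c * (\<Sum>w\<in>neps_verts n. \<Prod>i<n. f (Suc i) (w ! i)))"
    by (simp add: sum.cartesian_product sum_distrib_left)
  also have "\<dots> = (\<Prod>i<Suc n. \<Sum>c\<in>{0,1,2}. f i c)"
    by (simp only: Suc.IH[of "\<lambda>i. f (Suc i)"] prod.lessThan_Suc_shift sum_distrib_right)
  finally show ?case .
qed

definition neps_eigvec :: "nat \<Rightarrow> nat list \<Rightarrow> nat list \<Rightarrow> real" where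
  "neps_eigvec n a x = (\<Prod>i<n. p3_eigvec (a ! i) (x ! i))"

definition neps_eigval :: "nat \<Rightarrow> bool list set \<Rightarrow> nat list \<Rightarrow> real" where
  "neps_eigval n \<Omega> a = (\<Sum>\<beta>\<in>\<Omega>. \<Prod>i<n. if \<beta> ! i then p3_eigval (a ! i) else 1)"

lemma prod_of_bool_lessThan: "(\<Prod>i<(n::nat). of_bool (P i) :: real) = of_bool (\<forall>i<n. P i)"
  by (induction n) (auto simp: less_Suc_eq)

lemma neps_adj_eq_sum:
  assumes "finite \<Omega>"
  shows "neps_adj n \<Omega> x w
           = of_real (\<Sum>\<beta>\<in>\<Omega>. \<Prod>i<n. of_bool (p3_rel (\<beta> ! i) (x ! i) (w ! i)))"
proof -
  have "neps_adj n \<Omega> x w = of_real (card {\<beta>\<in>\<Omega>. \<forall>i<n. p3_rel (\<beta> ! i) (x ! i) (w ! i)})"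
    by (simp add: neps_adj_def p3_rel_def)
  also have "real (card {\<beta>\<in>\<Omega>. \<forall>i<n. p3_rel (\<beta> ! i) (x ! i) (w ! i)})
      = (\<Sum>\<beta>\<in>\<Omega>. of_bool (\<forall>i<n. p3_rel (\<beta> ! i) (x ! i) (w ! i)))"
    using assms by (simp add: Int_def)
  finally show ?thesis
    by (simp only: prod_of_bool_lessThan)
qed

lemma neps_adj_eigvec:
  assumes "finite \<Omega>" "x \<in> neps_verts n" "a \<in> neps_verts n"
  shows "(\<Sum>w\<in>neps_verts n. neps_adj n \<Omega> x w * of_real (neps_eigvec n a w))
           = of_real (neps_eigval n \<Omega> a * neps_eigvec n a x)"
proof -
  have "(\<Sum>w\<in>neps_verts n. (\<Sum>\<beta>\<in>\<Omega>. \<Prod>i<n. of_bool (p3_rel (\<beta> ! i) (x ! i) (w ! i)))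
            * neps_eigvec n a w)
      = (\<Sum>\<beta>\<in>\<Omega>. \<Sum>w\<in>neps_verts n. \<Prod>i<n.
            of_bool (p3_rel (\<beta> ! i) (x ! i) (w ! i)) * p3_eigvec (a ! i) (w ! i))"
    unfolding neps_eigvec_def
    by (simp add: sum_distrib_right prod.distrib sum.swap[of _ "neps_verts n"])
  also have "\<dots> = (\<Sum>\<beta>\<in>\<Omega>. \<Prod>i<n. \<Sum>c\<in>{0,1,2}.
                    of_bool (p3_rel (\<beta> ! i) (x ! i) c) * p3_eigvec (a ! i) c)"
    by (intro sum.cong refl) (rule sum_neps_verts_prod)
  also have "\<dots> = (\<Sum>\<beta>\<in>\<Omega>. \<Prod>i<n.
                    (if \<beta> ! i then p3_eigval (a ! i) else 1) * p3_eigvec (a ! i) (x ! i))"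
    using assms(2,3) by (intro sum.cong prod.cong refl p3_rel_eigvec) (meson lessThan_iff neps_verts_nth)+
  also have "\<dots> = neps_eigval n \<Omega> a * neps_eigvec n a x"
    unfolding neps_eigval_def neps_eigvec_def by (simp add: prod.distrib sum_distrib_right)
  finally show ?thesis
    unfolding neps_adj_eq_sum[OF assms(1)] by (simp flip: of_real_mult of_real_sum)
qed

lemma neps_eigvec_complete:
  assumes "x \<in> neps_verts n" "y \<in> neps_verts n"
  shows "(\<Sum>a\<in>neps_verts n. neps_eigvec n a x * neps_eigvec n a y) = of_bool (x = y)"
proof -
  have "(\<Sum>a\<in>neps_verts n. neps_eigvec n a x * neps_eigvec n a y)
      = (\<Prod>i<n. \<Sum>c\<in>{0,1,2}. p3_eigvec c (x ! i) * p3_eigvec c (y ! i))"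
    unfolding neps_eigvec_def prod.distrib[symmetric] by (rule sum_neps_verts_prod)
  also have "\<dots> = (\<Prod>i<n. of_bool (x ! i = y ! i))"
    using assms by (intro prod.cong refl p3_eigvec_complete) (meson lessThan_iff neps_verts_nth)+
  also have "\<dots> = of_bool (x = y)"
    using assms by (auto simp: prod_of_bool_lessThan neps_verts_def intro: nth_equalityI)
  finally show ?thesis .
qed

lemma neps_adj_pow_eq:
  assumes "finite \<Omega>" "x \<in> neps_verts n" "y \<in> neps_verts n"
  shows "neps_adj_pow n \<Omega> k x y
           = of_real (\<Sum>a\<in>neps_verts n. neps_eigval n \<Omega> a ^ k * neps_eigvec n a x * neps_eigvec n a y)"
  using assms(2)
proof (induction k arbitrary: x)
  case 0
  then show ?case using neps_eigvec_complete[OF 0 assms(3)] by simp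
next
  case (Suc k)
  let ?ev = "neps_eigval n \<Omega>" and ?ef = "neps_eigvec n" and ?V = "neps_verts n"
  have "neps_adj_pow n \<Omega> (Suc k) x y
      = (\<Sum>w\<in>?V. \<Sum>a\<in>?V. of_real (?ev a ^ k * ?ef a y) * (neps_adj n \<Omega> x w * of_real (?ef a w)))"
    by (simp add: Suc.IH sum_distrib_left mult_ac)
  also have "\<dots> = (\<Sum>a\<in>?V. of_real (?ev a ^ k * ?ef a y) * of_real (?ev a * ?ef a x))"
    by (simp add: sum.swap[of _ ?V] sum_distrib_left[symmetric] neps_adj_eigvec assms(1) Suc.prems)
  finally show ?case by (simp add: mult_ac)
qed

lemma neps_H_eq:
  assumes "finite \<Omega>" "u \<in> neps_verts n" "v \<in> neps_verts n"
  shows "neps_H n \<Omega> t u v = (\<Sum>a\<in>neps_verts n.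
           of_real (neps_eigvec n a u * neps_eigvec n a v) * cis (- (t * neps_eigval n \<Omega> a)))"
proof -
  define w where "w a = complex_of_real (neps_eigvec n a u * neps_eigvec n a v)" for a
  define z where "z a = - \<i> * of_real t * of_real (neps_eigval n \<Omega> a)" for a
  have "(- \<i> * of_real t) ^ k / of_nat (fact k) * neps_adj_pow n \<Omega> k u v
          = (\<Sum>a\<in>neps_verts n. w a * (z a ^ k /\<^sub>R fact k))" for k
    unfolding neps_adj_pow_eq[OF assms] w_def z_def power_mult_distrib
    by (simp add: of_real_sum sum_distrib_left scaleR_conv_of_real field_simps)
  then have "neps_H n \<Omega> t u v = (\<Sum>k. \<Sum>a\<in>neps_verts n. w a * (z a ^ k /\<^sub>R fact k))"
    unfolding neps_H_def by presburger
  also have "\<dots> = (\<Sum>a\<in>neps_verts n. \<Sum>k. w a * (z a ^ k /\<^sub>R fact k))"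
    by (intro suminf_sum summable_mult summable_exp_generic)
  also have "\<dots> = (\<Sum>a\<in>neps_verts n. w a * exp (z a))"
    by (intro sum.cong refl) (metis sums_unique sums_mult exp_converges)
  finally show ?thesis
    by (simp add: w_def z_def cis_conv_exp mult_ac)
qed

definition neps_sign :: "nat \<Rightarrow> bool list \<Rightarrow> nat list \<Rightarrow> int" where
  "neps_sign n \<beta> a = (\<Prod>i<n. if \<beta> ! i then p3_sign (a ! i) else 1)"

lemma neps_sign_cases: "neps_sign n \<beta> a \<in> {-1, 0, 1}"
proof -
  have prod_closed: "(\<Prod>i\<in>A. f i) \<in> {-1, 0, 1::int}" if "\<forall>i\<in>A. f i \<in> {-1, 0, 1}"
    for A and f :: "nat \<Rightarrow> int"
    using that by (induction A rule: infinite_finite_induct) auto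
  show ?thesis
    unfolding neps_sign_def by (rule prod_closed) (simp add: p3_sign_def)
qed

lemma neps_sign_eq_0_iff:
  assumes "j < n" "\<forall>i<n. i \<noteq> j \<longrightarrow> a ! i \<noteq> 1"
  shows "neps_sign n \<beta> a = 0 \<longleftrightarrow> \<beta> ! j \<and> a ! j = 1"
  using assms by (auto simp: neps_sign_def p3_sign_def)

lemma neps_eigval_eq:
  assumes "\<forall>\<beta>\<in>\<Omega>. length \<beta> = n"
  shows "neps_eigval n \<Omega> a = (\<Sum>\<beta>\<in>\<Omega>. of_int (neps_sign n \<beta> a) * sqrt 2 ^ hweight \<beta>)"
  unfolding neps_eigval_def
proof (intro sum.cong refl)
  fix \<beta> assume "\<beta> \<in> \<Omega>"
  have sqrt2_part: "(\<Prod>i<n. if \<beta> ! i then sqrt 2 else 1) = sqrt 2 ^ card {i. i < n \<and> \<beta> ! i}"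
    by (simp add: prod.If_cases Int_def)
  have "(\<Prod>i<n. if \<beta> ! i then p3_eigval (a ! i) else 1)
      = (\<Prod>i<n. of_int (if \<beta> ! i then p3_sign (a ! i) else 1) * (if \<beta> ! i then sqrt 2 else 1))"
    by (intro prod.cong refl) (simp add: p3_eigval_def)
  also have "\<dots> = of_int (neps_sign n \<beta> a) * sqrt 2 ^ card {i. i < n \<and> \<beta> ! i}"
    by (simp only: prod.distrib neps_sign_def of_int_prod sqrt2_part)
  finally show "(\<Prod>i<n. if \<beta> ! i then p3_eigval (a ! i) else 1)
      = of_int (neps_sign n \<beta> a) * sqrt 2 ^ hweight \<beta>"
    using assms \<open>\<beta> \<in> \<Omega>\<close> hweight_eq_card by simp
qed

lemma even_sum_neps_sign:
  fixes M :: "bool list \<Rightarrow> int"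
  assumes fin: "finite \<Omega>" and j: "j < n" and supp: "\<forall>i<n. i \<noteq> j \<longrightarrow> a ! i \<noteq> 1"
    and S: "S \<subseteq> \<Omega>" "odd (card {\<beta>\<in>S. \<beta> ! j})"
    and M: "\<forall>\<beta>\<in>\<Omega>. odd (M \<beta>) \<longleftrightarrow> \<beta> \<in> S"
  shows "even (\<Sum>\<beta>\<in>\<Omega>. M \<beta> * neps_sign n \<beta> a) \<longleftrightarrow> even (card S + of_bool (a ! j = 1))"
proof -
  have odd_sign: "odd (neps_sign n \<beta> a) \<longleftrightarrow> \<not> (\<beta> ! j \<and> a ! j = 1)" for \<beta>
    using neps_sign_cases[of n \<beta> a] neps_sign_eq_0_iff[OF j supp, of \<beta>] by auto
  have "{\<beta>\<in>\<Omega>. odd (M \<beta> * neps_sign n \<beta> a)} = {\<beta>\<in>S. \<not> (\<beta> ! j \<and> a ! j = 1)}"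
    using S(1) M odd_sign by auto
  moreover have "card S = card {\<beta>\<in>S. \<beta> ! j} + card {\<beta>\<in>S. \<not> \<beta> ! j}"
    using finite_subset[OF S(1) fin]
    by (subst card_Un_disjoint[symmetric]) (auto intro: arg_cong[where f = card])
  ultimately show ?thesis
    using even_sum_iff[OF fin, of "\<lambda>\<beta>. M \<beta> * neps_sign n \<beta> a"] S(2)
    by (cases "a ! j = 1") auto
qed

lemma neps_eigval_phase:
  fixes m p :: int and M :: "bool list \<Rightarrow> int" and \<theta> :: "bool \<Rightarrow> real"
  assumes fin: "finite \<Omega>" and len: "\<forall>\<beta>\<in>\<Omega>. length \<beta> = n"
    and j: "j < n" and supp: "\<forall>i<n. i \<noteq> j \<longrightarrow> a ! i \<noteq> 1"
    and S: "S \<subseteq> \<Omega>" "odd (card {\<beta>\<in>S. \<beta> ! j})"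
    and M: "\<forall>\<beta>\<in>\<Omega>. \<theta> (odd (hweight \<beta>)) * 2 ^ (hweight \<beta> div 2) = pi * of_int (M \<beta>)
                 \<and> (odd (M \<beta>) \<longleftrightarrow> \<beta> \<in> S)"
    and t: "t = \<theta> False + 2 * pi * m" "sqrt 2 * t = \<theta> True + 2 * pi * p + \<eta>"
  shows "cmod (cis (- (t * neps_eigval n \<Omega> a)) - (-1) ^ (card S + of_bool (a ! j = 1)))
           \<le> \<bar>\<eta>\<bar> * (\<Sum>\<beta>\<in>\<Omega>. 2 ^ (hweight \<beta> div 2))"
proof -
  \<comment> \<open>Each summand \<open>\<chi>\<^sub>\<beta> t \<surd>2\<^bsup>s(\<beta>)\<^esup>\<close> of \<open>t \<lambda>\<^sub>a\<close> is \<open>\<pi> M\<^sub>\<beta> \<chi>\<^sub>\<beta>\<close> modulo \<open>2\<pi>\<close>, up to at most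
    \<open>2\<^bsup>\<lfloor>s(\<beta>)/2\<rfloor>\<^esup>\<close> times the error \<open>\<eta>\<close>.\<close>
  define \<sigma> where "\<sigma> \<beta> = neps_sign n \<beta> a" for \<beta>
  define N where "N \<beta> = (if odd (hweight \<beta>) then p else m) * 2 ^ (hweight \<beta> div 2)" for \<beta>
  define c :: "bool list \<Rightarrow> real"
    where "c \<beta> = of_bool (odd (hweight \<beta>)) * 2 ^ (hweight \<beta> div 2)" for \<beta>
  have "t * neps_eigval n \<Omega> a = (\<Sum>\<beta>\<in>\<Omega>. of_int (\<sigma> \<beta>) * (t * sqrt 2 ^ hweight \<beta>))"
    unfolding neps_eigval_eq[OF len] \<sigma>_def by (simp add: sum_distrib_left mult_ac)
  also have "\<dots> = (\<Sum>\<beta>\<in>\<Omega>. of_int (\<sigma> \<beta>) * (pi * of_int (M \<beta>) + 2 * pi * of_int (N \<beta>) + \<eta> * c \<beta>))"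
    using M by (intro sum.cong refl) (simp add: sqrt2_power_phase[OF t] N_def c_def)
  also have "\<dots> = pi * of_int (\<Sum>\<beta>\<in>\<Omega>. M \<beta> * \<sigma> \<beta>) + 2 * pi * of_int (\<Sum>\<beta>\<in>\<Omega>. N \<beta> * \<sigma> \<beta>)
                    + \<eta> * (\<Sum>\<beta>\<in>\<Omega>. of_int (\<sigma> \<beta>) * c \<beta>)"
    by (simp add: algebra_simps sum.distrib sum_distrib_left)
  finally have phase: "t * neps_eigval n \<Omega> a = \<dots>" .
  have "\<bar>\<Sum>\<beta>\<in>\<Omega>. of_int (\<sigma> \<beta>) * c \<beta>\<bar> \<le> (\<Sum>\<beta>\<in>\<Omega>. \<bar>of_int (\<sigma> \<beta>) * c \<beta>\<bar>)"
    by (rule sum_abs)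
  also have "\<dots> \<le> (\<Sum>\<beta>\<in>\<Omega>. 2 ^ (hweight \<beta> div 2))"
  proof (intro sum_mono)
    fix \<beta>
    have "\<bar>real_of_int (\<sigma> \<beta>)\<bar> \<le> 1"
      using neps_sign_cases[of n \<beta> a] unfolding \<sigma>_def by auto
    then show "\<bar>of_int (\<sigma> \<beta>) * c \<beta>\<bar> \<le> 2 ^ (hweight \<beta> div 2)"
      unfolding c_def abs_mult by (simp add: mult_left_le_one_le)
  qed
  finally have "\<bar>\<eta> * (\<Sum>\<beta>\<in>\<Omega>. of_int (\<sigma> \<beta>) * c \<beta>)\<bar> \<le> \<bar>\<eta>\<bar> * (\<Sum>\<beta>\<in>\<Omega>. 2 ^ (hweight \<beta> div 2))"
    unfolding abs_mult by (rule mult_left_mono) simp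
  moreover have "even (\<Sum>\<beta>\<in>\<Omega>. M \<beta> * \<sigma> \<beta>) \<longleftrightarrow> even (card S + of_bool (a ! j = 1))"
    unfolding \<sigma>_def using even_sum_neps_sign[OF fin j supp S] M by blast
  ultimately show ?thesis
    unfolding phase using norm_cis_minus_sign_le order_trans by blast
qed

section \<open>Pretty good state transfer between axis vertices\<close>

definition axis_vertex :: "nat \<Rightarrow> nat \<Rightarrow> nat \<Rightarrow> nat list" where
  "axis_vertex n j c = (replicate n 1)[j := c]"

lemma axis_vertex_in_neps_verts: "c \<in> {0,1,2} \<Longrightarrow> axis_vertex n j c \<in> neps_verts n"
  unfolding axis_vertex_def neps_verts_def using set_update_subset_insert by fastforce

lemma nth_axis_vertex: "i < n \<Longrightarrow> axis_vertex n j c ! i = (if i = j then c else 1)"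
  by (simp add: axis_vertex_def nth_list_update)

lemma neps_eigvec_axis_vertex_eq_0:
  assumes "i < n" "i \<noteq> j" "a ! i = 1"
  shows "neps_eigvec n a (axis_vertex n j c) = 0"
  unfolding neps_eigvec_def using assms
  by (intro prod_zero bexI[of _ i]) (auto simp: nth_axis_vertex p3_eigvec_def)

lemma axis_vertex_weights:
  assumes j: "j < n"
  defines "w a \<equiv> neps_eigvec n a (axis_vertex n j 0) * neps_eigvec n a (axis_vertex n j 2)"
  shows "(\<Sum>a\<in>neps_verts n. w a * (-1) ^ of_bool (a ! j = 1)) = 1"
    and "(\<Sum>a\<in>neps_verts n. \<bar>w a\<bar>) = 1"
proof -
  define F where "F i c = p3_eigvec c (axis_vertex n j 0 ! i) * p3_eigvec c (axis_vertex n j 2 ! i)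
                            * (-1) ^ of_bool (i = j \<and> c = 1)" for i c
  have w_eq: "w a * (-1) ^ of_bool (a ! j = 1) = (\<Prod>i<n. F i (a ! i))" for a
  proof -
    have "(-1 :: real) ^ of_bool (a ! j = 1) = (\<Prod>i<n. if i = j then (-1) ^ of_bool (a ! i = 1) else 1)"
      using j by (simp add: prod.delta)
    also have "\<dots> = (\<Prod>i<n. (-1) ^ of_bool (i = j \<and> a ! i = 1))"
      by (intro prod.cong refl) auto
    finally show ?thesis
      unfolding w_def F_def neps_eigvec_def by (simp add: prod.distrib)
  qed
  have F_sum: "(\<Sum>c\<in>{0,1,2}. F i c) = 1" and F_nonneg: "c \<in> {0,1,2} \<Longrightarrow> 0 \<le> F i c"
    if "i < n" for i c
    using that by (auto simp: F_def nth_axis_vertex p3_eigvec_def p3_sign_def)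
  show sum_w: "(\<Sum>a\<in>neps_verts n. w a * (-1) ^ of_bool (a ! j = 1)) = 1"
    unfolding w_eq sum_neps_verts_prod using F_sum by (intro prod.neutral) simp
  have "\<bar>w a\<bar> = w a * (-1) ^ of_bool (a ! j = 1)" if "a \<in> neps_verts n" for a
  proof -
    have "0 \<le> w a * (-1) ^ of_bool (a ! j = 1)"
      unfolding w_eq using that
      by (intro prod_nonneg ballI F_nonneg) (meson lessThan_iff neps_verts_nth)+
    then show ?thesis
      by (cases "a ! j = 1") auto
  qed
  then show "(\<Sum>a\<in>neps_verts n. \<bar>w a\<bar>) = 1"
    using sum_w by simp
qed

lemma neps_H_axis_vertices_near_unit:
  fixes m p :: int and M :: "bool list \<Rightarrow> int" and \<theta> :: "bool \<Rightarrow> real"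
  assumes fin: "finite \<Omega>" and len: "\<forall>\<beta>\<in>\<Omega>. length \<beta> = n" and j: "j < n"
    and S: "S \<subseteq> \<Omega>" "odd (card {\<beta>\<in>S. \<beta> ! j})"
    and M: "\<forall>\<beta>\<in>\<Omega>. \<theta> (odd (hweight \<beta>)) * 2 ^ (hweight \<beta> div 2) = pi * of_int (M \<beta>)
                 \<and> (odd (M \<beta>) \<longleftrightarrow> \<beta> \<in> S)"
    and t: "t = \<theta> False + 2 * pi * m" "sqrt 2 * t = \<theta> True + 2 * pi * p + \<eta>"
  shows "\<bar>cmod (neps_H n \<Omega> t (axis_vertex n j 0) (axis_vertex n j 2)) - 1\<bar>
           \<le> \<bar>\<eta>\<bar> * (\<Sum>\<beta>\<in>\<Omega>. 2 ^ (hweight \<beta> div 2))"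
proof -
  let ?V = "neps_verts n" and ?u = "axis_vertex n j 0" and ?v = "axis_vertex n j 2"
  define w where "w a = neps_eigvec n a ?u * neps_eigvec n a ?v" for a
  define s :: "nat list \<Rightarrow> complex" where "s a = (-1) ^ (card S + of_bool (a ! j = 1))" for a
  have "(\<Sum>a\<in>?V. of_real (w a) * s a)
      = (-1) ^ card S * of_real (\<Sum>a\<in>?V. w a * (-1) ^ of_bool (a ! j = 1))"
    unfolding s_def by (simp add: sum_distrib_left power_add mult_ac)
  also have "\<dots> = (-1) ^ card S"
    unfolding w_def axis_vertex_weights(1)[OF j] by simp
  finally have norm_ws: "cmod (\<Sum>a\<in>?V. of_real (w a) * s a) = 1"
    by (simp add: norm_power)
  have sum_abs_w: "(\<Sum>a\<in>?V. \<bar>w a\<bar>) \<le> 1"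
    using axis_vertex_weights(2)[OF j] unfolding w_def by simp
  have close: "cmod (cis (- (t * neps_eigval n \<Omega> a)) - s a) \<le> \<bar>\<eta>\<bar> * (\<Sum>\<beta>\<in>\<Omega>. 2 ^ (hweight \<beta> div 2))"
    if "w a \<noteq> 0" for a
  proof -
    have "\<forall>i<n. i \<noteq> j \<longrightarrow> a ! i \<noteq> 1"
      using that neps_eigvec_axis_vertex_eq_0 unfolding w_def by fastforce
    then show ?thesis
      unfolding s_def by (rule neps_eigval_phase[OF fin len j _ S M t])
  qed
  have "\<bar>cmod (\<Sum>a\<in>?V. of_real (w a) * cis (- (t * neps_eigval n \<Omega> a))) - 1\<bar>
      \<le> \<bar>\<eta>\<bar> * (\<Sum>\<beta>\<in>\<Omega>. 2 ^ (hweight \<beta> div 2))"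
    by (rule norm_sum_near_unit[OF sum_abs_w norm_ws close]) (simp_all add: sum_nonneg)
  moreover have "?u \<in> ?V" "?v \<in> ?V"
    by (simp_all add: axis_vertex_in_neps_verts)
  ultimately show ?thesis
    by (simp add: neps_H_eq fin w_def)
qed

lemma neps_pgst_axis_vertices:
  fixes M :: "bool list \<Rightarrow> int" and \<theta> :: "bool \<Rightarrow> real"
  assumes fin: "finite \<Omega>" and len: "\<forall>\<beta>\<in>\<Omega>. length \<beta> = n" and j: "j < n"
    and S: "S \<subseteq> \<Omega>" "odd (card {\<beta>\<in>S. \<beta> ! j})"
    and M: "\<forall>\<beta>\<in>\<Omega>. \<theta> (odd (hweight \<beta>)) * 2 ^ (hweight \<beta> div 2) = pi * of_int (M \<beta>)
                 \<and> (odd (M \<beta>) \<longleftrightarrow> \<beta> \<in> S)"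
  shows "neps_pgst n \<Omega> (axis_vertex n j 0) (axis_vertex n j 2)"
  unfolding neps_pgst_def
proof (intro allI impI)
  fix \<epsilon> :: real
  assume "\<epsilon> > 0"
  define B where "B = (\<Sum>\<beta>\<in>\<Omega>. (2::real) ^ (hweight \<beta> div 2))"
  have "B \<ge> 0"
    unfolding B_def by (intro sum_nonneg) simp
  with \<open>\<epsilon> > 0\<close> have "\<epsilon> / (B + 1) > 0"
    by simp
  then obtain m p :: int
    where mp: "\<bar>sqrt 2 * (\<theta> False + 2 * pi * m) - \<theta> True - 2 * pi * p\<bar> < \<epsilon> / (B + 1)"
    by (rule sqrt2_simultaneous_approx)
  define t where "t = \<theta> False + 2 * pi * m"
  define \<eta> where "\<eta> = sqrt 2 * t - \<theta> True - 2 * pi * p"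
  have "\<bar>\<eta>\<bar> * B \<le> \<epsilon> / (B + 1) * B"
    using mp \<open>B \<ge> 0\<close> unfolding \<eta>_def t_def by (intro mult_right_mono) auto
  also have "\<dots> < \<epsilon>"
    using \<open>\<epsilon> > 0\<close> \<open>B \<ge> 0\<close> by (simp add: field_simps)
  finally show "\<exists>t. \<bar>cmod (neps_H n \<Omega> t (axis_vertex n j 0) (axis_vertex n j 2)) - 1\<bar> < \<epsilon>"
    using neps_H_axis_vertices_near_unit[OF fin len j S M t_def, of p \<eta>]
    unfolding \<eta>_def B_def by (intro exI[of _ t]) simp
qed

lemma neps_pgst_min_weight_parity_class:
  assumes fin: "finite \<Omega>" and len: "\<forall>\<beta>\<in>\<Omega>. length \<beta> = n"
    and C: "C = {\<beta>\<in>\<Omega>. odd (hweight \<beta>) = q}" "C \<noteq> {}"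
    and sum: "zsum n {\<beta>\<in>C. hweight \<beta> = Min (hweight ` C)} \<noteq> zzero n"
  shows "\<exists>u\<in>neps_verts n. \<exists>v\<in>neps_verts n. u \<noteq> v \<and> neps_pgst n \<Omega> u v"
proof -
  define k where "k = Min (hweight ` C)"
  define S where "S = {\<beta>\<in>C. hweight \<beta> = k}"
  obtain j where j: "j < n" "odd (card {\<beta>\<in>S. \<beta> ! j})"
    using sum unfolding S_def k_def by (rule zsum_neq_zzeroE)
  have "finite C"
    using fin C(1) by simp
  then have k_le: "k \<le> hweight \<beta>" if "\<beta> \<in> C" for \<beta>
    unfolding k_def using that by simp
  have "k \<in> hweight ` C"
    unfolding k_def using \<open>finite C\<close> C(2) by (intro Min_in) auto
  then have k_parity: "odd k = q"
    using C(1) by auto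
  \<comment> \<open>A tuple of parity \<open>q\<close> and weight \<open>s\<close> then has phase \<open>\<pi> 2\<^bsup>(s-k)/2\<^esup>\<close>, an odd multiple of \<open>\<pi>\<close>
    exactly when \<open>s = k\<close>; tuples of the other parity have phase \<open>0\<close>.\<close>
  define \<theta> where "\<theta> r = (if r = q then pi / 2 ^ (k div 2) else 0)" for r
  define M :: "bool list \<Rightarrow> int"
    where "M \<beta> = (if odd (hweight \<beta>) = q then 2 ^ (hweight \<beta> div 2 - k div 2) else 0)" for \<beta>
  have "\<theta> (odd (hweight \<beta>)) * 2 ^ (hweight \<beta> div 2) = pi * of_int (M \<beta>) \<and> (odd (M \<beta>) \<longleftrightarrow> \<beta> \<in> S)"
    if "\<beta> \<in> \<Omega>" for \<beta>
  proof (cases "odd (hweight \<beta>) = q")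
    case True
    then have "\<beta> \<in> C"
      using that C(1) by simp
    then show ?thesis
      using half_weight_power_ratio[OF k_le] True k_parity by (auto simp: \<theta>_def M_def S_def)
  next
    case False
    then show ?thesis
      by (simp add: \<theta>_def M_def S_def C(1))
  qed
  moreover have "S \<subseteq> \<Omega>"
    unfolding S_def C(1) by blast
  ultimately have "neps_pgst n \<Omega> (axis_vertex n j 0) (axis_vertex n j 2)"
    using neps_pgst_axis_vertices[OF fin len j(1) _ j(2)] by blast
  moreover have "axis_vertex n j 0 \<noteq> axis_vertex n j 2"
    using nth_axis_vertex[OF j(1), of j] by (metis zero_neq_numeral)
  ultimately show ?thesis
    using axis_vertex_in_neps_verts by blast
qed

theorem theorem3p9:
  fixes n :: nat and \<Omega> \<Omega>e \<Omega>o :: "bool list set"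
  assumes "\<Omega> \<subseteq> zvecs n - {zzero n}"
    and "\<Omega> = \<Omega>e \<union> \<Omega>o"
    and "\<Omega>e \<noteq> {}" and "\<Omega>o \<noteq> {}"
    and "\<forall>\<beta>\<in>\<Omega>e. even (hweight \<beta>)"
    and "\<forall>\<beta>\<in>\<Omega>o. odd (hweight \<beta>)"
    and "gf2_rank n \<Omega> = n"
    and "zsum n {\<beta>\<in>\<Omega>o. hweight \<beta> = Min (hweight ` \<Omega>o)} \<noteq> zzero n
         \<or> zsum n {\<beta>\<in>\<Omega>e. hweight \<beta> = Min (hweight ` \<Omega>e)} \<noteq> zzero n"
  shows "\<exists>u\<in>neps_verts n. \<exists>v\<in>neps_verts n. u \<noteq> v \<and> neps_pgst n \<Omega> u v"
proof -
  have "finite (zvecs n)"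
    using finite_lists_length_eq[of "UNIV :: bool set" n] by (simp add: zvecs_def)
  then have fin: "finite \<Omega>"
    using assms(1) finite_subset by blast
  have len: "\<forall>\<beta>\<in>\<Omega>. length \<beta> = n"
    using assms(1) by (auto simp: zvecs_def)
  have odd_class: "\<Omega>o = {\<beta>\<in>\<Omega>. odd (hweight \<beta>) = True}"
    and even_class: "\<Omega>e = {\<beta>\<in>\<Omega>. odd (hweight \<beta>) = False}"
    using assms(2,5,6) by auto
  from assms(8) show ?thesis
  proof
    assume "zsum n {\<beta>\<in>\<Omega>o. hweight \<beta> = Min (hweight ` \<Omega>o)} \<noteq> zzero n"
    then show ?thesis
      by (rule neps_pgst_min_weight_parity_class[OF fin len odd_class assms(4)])
  next
    assume "zsum n {\<beta>\<in>\<Omega>e. hweight \<beta> = Min (hweight ` \<Omega>e)} \<noteq> zzero n"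
    then show ?thesis
      by (rule neps_pgst_min_weight_parity_class[OF fin len even_class assms(3)])
  qed
qed

end
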